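(* Let $s=\sigma+it$ with $-1/2\le\sigma<0$ and $t\ge 1$. Then there is a complex number $E(\sigma,t)$ with $$|E(\sigma,t)|\le\frac{\pi}{4}+\frac{1-2\sigma}{2}+\frac{18\sigma^2-18\sigma+19}{12t}$$ such that $$\pi^{s-1/2}\frac{\Gamma\left(\frac{1-s}{2}\right)}{\Gamma\left(\frac s2\right)}=\left(\frac{(1-\sigma)^2+t^2}{4}\right)^{-\sigma/4}\left(\frac{\sigma^2+t^2}{4}\right)^{(1-\sigma)/4}\pi^{\sigma-\frac12}\exp\Big(\sigma-\tfrac12+it\left(-\log t+\log(2\pi)+1\right)+E(\sigma,t)\Big).$$ *)

theory Defs
  imports "HOL-Analysis.Analysis"
begin

end

theory Submission
  imports Defs
begin

(* Write w = (1 - s)/2 and z = s/2.  The Gauss product for Gamma together with the telescoping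
   term \<phi>(u) = (u + 1/2) (Ln (u + 1) - Ln u) - 1 gives Gudermann's series
   ln Gamma u = (u - 1/2) Ln u - u + ln (2 pi)/2 + \<Sum>\<^sub>k \<phi>(u + k); only the quotient
   Gamma w / Gamma z is needed, so the constant ln (2 pi)/2 never has to be identified.
   In terms of q = 1/(2u + 1) one has \<phi>(u) = \<Sum>\<^sub>j q^(2j+2)/(2j+3), so \<phi>(u) = O(|2u + 1|^-2)
   and the two Gudermann sums differ by at most 4/(3t).  What remains is the explicit term
   (w - 1/2) Ln w - w - (z - 1/2) Ln z + z.  The arguments of w and z are arctangents, and
   arctan x \<le> x and ln (1 + x) \<le> x bound its deviation from the stated main part by
   pi/4 + (1 - 2\<sigma>)/2 + O(1/t). *)

section \<open>Gudermann's term and its power series\<close>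

lemma Im_Ln_neg_imp: "Im z < 0 \<Longrightarrow> -pi < Im (Ln z) \<and> Im (Ln z) < 0"
  using Im_Ln_pos_le[of z] Im_Ln_le_pi[of z] mpi_less_Im_Ln[of z] by fastforce

lemma Ln_add_one_minus_Ln:
  fixes u :: complex
  defines "q \<equiv> 1 / (2*u + 1)"
  assumes u: "Im u \<noteq> 0" and q: "norm q < 1"
  shows "Ln (u + 1) - Ln u = Ln (1 + q) - Ln (1 - q)"
proof (rule exp_complex_eqI)
  have nz: "u \<noteq> 0" "u + 1 \<noteq> 0" "2*u + 1 \<noteq> 0"
    using u by (auto simp: complex_eq_iff)
  have Re_q: "0 < Re (1 + q)" "0 < Re (1 - q)"
    using q abs_Re_le_cmod[of q] by auto
  then have nq: "1 + q \<noteq> 0" "1 - q \<noteq> 0" by (auto simp: complex_eq_iff)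
  have "\<bar>Im (Ln (u + 1)) - Im (Ln u)\<bar> < pi"
    using Im_Ln_pos_lt_imp[of u] Im_Ln_pos_lt_imp[of "u + 1"]
      Im_Ln_neg_imp[of u] Im_Ln_neg_imp[of "u + 1"] u
    by (cases "Im u > 0") (auto simp: abs_less_iff)
  moreover have "\<bar>Im (Ln (1 + q)) - Im (Ln (1 - q))\<bar> < pi"
    using Re_Ln_pos_lt_imp[OF Re_q(1)] Re_Ln_pos_lt_imp[OF Re_q(2)] by linarith
  ultimately show "\<bar>Im (Ln (u + 1) - Ln u) - Im (Ln (1 + q) - Ln (1 - q))\<bar> < 2 * pi"
    by simp
  have "(u + 1) * (1 - q) = (1 + q) * u"
    using nz unfolding q_def by (simp add: field_simps)
  then have "(u + 1) / u = (1 + q) / (1 - q)"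
    using nz nq by (simp add: frac_eq_eq)
  then show "exp (Ln (u + 1) - Ln u) = exp (Ln (1 + q) - Ln (1 - q))"
    using nz nq by (simp add: exp_diff)
qed

lemma sums_Ln_quotient_odd_powers:
  fixes q :: complex
  assumes "norm q < 1" "q \<noteq> 0"
  shows "(\<lambda>j. q^(2*j+2) / of_nat (2*j+3)) sums ((Ln (1 + q) - Ln (1 - q)) / (2*q) - 1)"
proof -
  have "(\<lambda>n. - ((-q)^n) / of_nat n - - ((-(-q))^n) / of_nat n) sums (Ln (1 + q) - Ln (1 + -q))"
    using assms(1) by (intro sums_diff Ln_series') auto
  then have all: "(\<lambda>n. (q^n - (-q)^n) / of_nat n) sums (Ln (1 + q) - Ln (1 - q))"
    by (simp add: diff_divide_distrib)
  have "(\<lambda>j. 2 * q^(2*j+1) / of_nat (2*j+1)) sums (Ln (1 + q) - Ln (1 - q))"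
  proof -
    have "(q^n - (-q)^n) / of_nat n = 0" if "n \<notin> range (\<lambda>j. 2*j + 1)" for n :: nat
    proof -
      have "even n" using that by (metis oddE rangeI)
      then show ?thesis by simp
    qed
    then have "(\<lambda>j. (\<lambda>n. (q^n - (-q)^n) / of_nat n) (2*j + 1)) sums (Ln (1 + q) - Ln (1 - q))"
      using all by (subst sums_mono_reindex) (auto simp: strict_mono_def)
    then show ?thesis by simp
  qed
  then have "(\<lambda>j. 2 * q^(2*j+1) / of_nat (2*j+1) / (2*q)) sums ((Ln (1 + q) - Ln (1 - q)) / (2*q))"
    by (rule sums_divide)
  moreover have "2 * q^(2*j+1) / of_nat (2*j+1) / (2*q) = q^(2*j) / of_nat (2*j+1)" for j
    using assms(2) by (simp add: power_add)
  ultimately have "(\<lambda>j. q^(2*j) / of_nat (2*j+1)) sums ((Ln (1 + q) - Ln (1 - q)) / (2*q))"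
    by simp
  then have "(\<lambda>j. q^(2*Suc j) / of_nat (2*Suc j+1)) sums ((Ln (1 + q) - Ln (1 - q)) / (2*q) - 1)"
    using sums_Suc_iff[of "\<lambda>j. q^(2*j) / of_nat (2*j+1)"] by simp
  then show ?thesis by (simp add: algebra_simps)
qed

definition gudermann_term :: "complex \<Rightarrow> complex" where
  "gudermann_term u = (u + 1/2) * (Ln (u + 1) - Ln u) - 1"

lemma gudermann_term_sums:
  fixes u :: complex
  defines "q \<equiv> 1 / (2*u + 1)"
  assumes u: "Im u \<noteq> 0" and q: "norm q < 1"
  shows "(\<lambda>j. q^(2*j+2) / of_nat (2*j+3)) sums gudermann_term u"
proof -
  have nz: "2*u + 1 \<noteq> 0" using u by (auto simp: complex_eq_iff)
  then have "q \<noteq> 0" by (simp add: q_def)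
  moreover have "gudermann_term u = (Ln (1 + q) - Ln (1 - q)) / (2*q) - 1"
    unfolding gudermann_term_def Ln_add_one_minus_Ln[OF u q[unfolded q_def], folded q_def]
    using nz by (simp add: q_def field_simps)
  ultimately show ?thesis using sums_Ln_quotient_odd_powers[OF q] by simp
qed

definition gudermann_const :: "real \<Rightarrow> real" where
  "gudermann_const R = 1/3 + R/5 + R^2 / (7*(1 - R))"

lemma gudermann_const_mono:
  assumes "0 \<le> r" "r \<le> R" "R < 1"
  shows "gudermann_const r \<le> gudermann_const R"
proof -
  have "r^2 / (7*(1 - r)) \<le> R^2 / (7*(1 - R))"
    using assms by (intro frac_le power_mono) auto
  then show ?thesis using assms unfolding gudermann_const_def by simp
qed

lemma sums_gudermann_majorant:
  fixes r :: real
  assumes "0 \<le> r" "r < 1"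
  shows "(\<lambda>j. if j = 0 then r/3 else if j = 1 then r^2/5 else r^(j+1)/7) sums (r * gudermann_const r)"
proof -
  let ?b = "\<lambda>j::nat. if j = 0 then r/3 else if j = 1 then r^2/5 else r^(j+1)/7"
  have "(\<lambda>i. r^3/7 * r^i) sums (r^3/7 * (1/(1 - r)))"
    using assms by (intro sums_mult) (simp add: geometric_sums)
  moreover have "?b (i + 2) = r^3/7 * r^i" for i
    by (simp add: power_add power3_eq_cube)
  ultimately have "(\<lambda>i. ?b (i + 2)) sums (r^3 / (7*(1 - r)))" by (simp only:) simp
  then have "?b sums (r^3 / (7*(1 - r)) + (\<Sum>i<2. ?b i))" by (rule iffD1[OF sums_iff_shift])
  moreover have "r^3 / (7*(1 - r)) + (\<Sum>i<2. ?b i) = r * gudermann_const r"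
    by (simp add: numeral_2_eq_2 gudermann_const_def power2_eq_square power3_eq_cube algebra_simps)
  ultimately show ?thesis by simp
qed

lemma norm_gudermann_term_le:
  fixes u :: complex
  defines "r \<equiv> 1 / norm (2*u + 1)^2"
  assumes u: "Im u \<noteq> 0" and r: "r < 1"
  shows "norm (gudermann_term u) \<le> r * gudermann_const r"
proof -
  define q where "q = 1 / (2*u + 1)"
  have r_eq: "norm q ^ 2 = r" by (simp add: q_def r_def norm_divide power_divide)
  have "0 \<le> r" by (simp add: r_def)
  have "norm q ^ 2 < 1 ^ 2" using r_eq r by simp
  then have "norm q < 1" by (rule power_less_imp_less_base) simp
  note S = gudermann_term_sums[OF u this[unfolded q_def], folded q_def]
  let ?b = "\<lambda>j::nat. if j = 0 then r/3 else if j = 1 then r^2/5 else r^(j+1)/7"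
  have B: "?b sums (r * gudermann_const r)" by (rule sums_gudermann_majorant) fact+
  have le: "norm (q^(2*j+2) / of_nat (2*j+3)) \<le> ?b j" for j
  proof -
    have "norm (q^(2*j+2)) = r^(j+1)"
      unfolding norm_power r_eq[symmetric] power_mult[symmetric] by (simp add: algebra_simps)
    then have "norm (q^(2*j+2) / of_nat (2*j+3)) = r^(j+1) / of_nat (2*j+3)"
      by (simp only: norm_divide norm_of_nat)
    also have "\<dots> \<le> ?b j"
    proof (cases "j \<ge> 2")
      case True
      then have "r^(j+1) / of_nat (2*j+3) \<le> r^(j+1) / 7"
        using \<open>0 \<le> r\<close> by (intro divide_left_mono) auto
      then show ?thesis using True by simp
    next
      case False
      then have "j = 0 \<or> j = 1" by auto
      then show ?thesis by (auto simp: power2_eq_square)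
    qed
    finally show ?thesis .
  qed
  have summ: "summable (\<lambda>j. norm (q^(2*j+2) / of_nat (2*j+3)))"
    using le by (intro summable_norm_comparison_test[OF _ sums_summable[OF B]]) blast
  have "norm (gudermann_term u) \<le> (\<Sum>j. norm (q^(2*j+2) / of_nat (2*j+3)))"
    using summable_norm[OF summ] S by (simp add: sums_iff)
  also have "\<dots> \<le> suminf ?b" by (rule suminf_le[OF le summ sums_summable[OF B]])
  also have "\<dots> = r * gudermann_const r" using B by (simp add: sums_iff)
  finally show ?thesis .
qed

lemma norm_gudermann_term_le_const:
  fixes u :: complex
  assumes "Im u \<noteq> 0" "1 / norm (2*u + 1)^2 \<le> R" "R < 1"
  shows "norm (gudermann_term u) \<le> gudermann_const R / norm (2*u + 1)^2"
proof -
  let ?r = "1 / norm (2*u + 1)^2"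
  have "0 \<le> ?r" by simp
  have "norm (gudermann_term u) \<le> ?r * gudermann_const ?r"
    using assms by (intro norm_gudermann_term_le) auto
  also have "\<dots> \<le> ?r * gudermann_const R"
    using assms \<open>0 \<le> ?r\<close> by (intro mult_left_mono gudermann_const_mono) auto
  finally show ?thesis by simp
qed

lemma sum_inverse_shifted_squares_le:
  fixes c T :: real
  assumes "0 \<le> c" "0 < c - 1 + T"
  shows "(\<Sum>k<n. 1 / ((c + 2 * of_nat k)^2 + T^2)) \<le> 1 / (c - 1 + T)"
proof -
  have step: "1 / (a^2 + T^2) \<le> 1 / (a - 1 + T) - 1 / (a + 1 + T)" if "0 < a - 1 + T" for a
  proof -
    have "(a - 1 + T) * (a + 1 + T) \<le> 2 * (a^2 + T^2)"
      using zero_le_power2[of "a - T"] by (simp add: power2_eq_square algebra_simps)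
    moreover have "0 < (a - 1 + T) * (a + 1 + T)" using that by simp
    ultimately have "1 / (a^2 + T^2) \<le> 2 / ((a - 1 + T) * (a + 1 + T))"
      by (simp add: field_simps)
    also have "\<dots> = 1 / (a - 1 + T) - 1 / (a + 1 + T)" using that by (simp add: field_simps)
    finally show ?thesis .
  qed
  have "(\<Sum>k<n. 1 / ((c + 2 * of_nat k)^2 + T^2)) \<le> 1 / (c - 1 + T) - 1 / (c + 2 * of_nat n - 1 + T)"
  proof (induction n)
    case (Suc n)
    have "1 / ((c + 2 * of_nat n)^2 + T^2) \<le> 1 / (c + 2 * of_nat n - 1 + T) - 1 / (c + 2 * of_nat n + 1 + T)"
      using assms by (intro step) simp
    then show ?case using Suc.IH by (simp add: algebra_simps)
  qed simp
  also have "\<dots> \<le> 1 / (c - 1 + T)" using assms by simp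
  finally show ?thesis .
qed

lemma gudermann_series_bound:
  fixes u :: complex and R :: real
  assumes "Im u \<noteq> 0" "-1/2 \<le> Re u" "0 < Re u + \<bar>Im u\<bar>"
    and "1 / norm (2*u + 1)^2 \<le> R" "R < 1"
  shows "summable (\<lambda>k. norm (gudermann_term (u + of_nat k)))"
    and "(\<Sum>k. norm (gudermann_term (u + of_nat k))) \<le> gudermann_const R / (2 * (Re u + \<bar>Im u\<bar>))"
proof -
  define c where "c = 2 * Re u + 1"
  define T where "T = 2 * \<bar>Im u\<bar>"
  have norm_sq: "norm (2 * (u + of_nat k) + 1)^2 = (c + 2 * of_nat k)^2 + T^2" for k
    unfolding cmod_power2 by (simp add: c_def T_def algebra_simps)
  have "0 \<le> c" "0 < c - 1 + T" "0 < T" using assms(1-3) by (simp_all add: c_def T_def)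
  then have "0 < c^2 + T^2" by (intro add_nonneg_pos) auto
  then have "0 < 1 / norm (2*u + 1)^2" using norm_sq[of 0] by simp
  then have "0 < R" using assms(4) by linarith
  then have "0 \<le> gudermann_const R" using assms(5) by (simp add: gudermann_const_def)
  have term_le: "norm (gudermann_term (u + of_nat k)) \<le> gudermann_const R * (1 / ((c + 2 * of_nat k)^2 + T^2))" for k
  proof -
    have "c^2 \<le> (c + 2 * of_nat k)^2" using \<open>0 \<le> c\<close> by (simp add: power_mono)
    then have "1 / norm (2 * (u + of_nat k) + 1)^2 \<le> 1 / norm (2*u + 1)^2"
      using norm_sq[of k] norm_sq[of 0] \<open>0 < c^2 + T^2\<close> by (simp add: frac_le)
    then show ?thesis
      using norm_gudermann_term_le_const[of "u + of_nat k" R] assms(1,4,5) norm_sq[of k] by simp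
  qed
  have partial_le: "(\<Sum>k<n. norm (gudermann_term (u + of_nat k))) \<le> gudermann_const R / (c - 1 + T)" for n
  proof -
    have "(\<Sum>k<n. norm (gudermann_term (u + of_nat k)))
        \<le> gudermann_const R * (\<Sum>k<n. 1 / ((c + 2 * of_nat k)^2 + T^2))"
      unfolding sum_distrib_left by (intro sum_mono term_le)
    also have "\<dots> \<le> gudermann_const R * (1 / (c - 1 + T))"
      using \<open>0 \<le> c\<close> \<open>0 < c - 1 + T\<close> \<open>0 \<le> gudermann_const R\<close>
      by (intro mult_left_mono sum_inverse_shifted_squares_le)
    finally show ?thesis by simp
  qed
  show summ: "summable (\<lambda>k. norm (gudermann_term (u + of_nat k)))"
    by (rule summableI_nonneg_bounded[OF _ partial_le]) simp
  have "c - 1 + T = 2 * (Re u + \<bar>Im u\<bar>)" by (simp add: c_def T_def)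
  then show "(\<Sum>k. norm (gudermann_term (u + of_nat k))) \<le> gudermann_const R / (2 * (Re u + \<bar>Im u\<bar>))"
    using suminf_le_const[OF summ partial_le] by simp
qed

section \<open>Quotients of Gamma values via Gudermann's series\<close>

lemma sum_gudermann_term_telescope:
  fixes u :: complex
  shows "(\<Sum>k<n. gudermann_term (u + of_nat k)) =
         (u + of_nat n + 1/2) * Ln (u + of_nat n) - (u - 1/2) * Ln u - (\<Sum>k\<le>n. Ln (u + of_nat k)) - of_nat n"
proof (induction n)
  case (Suc n)
  then show ?case by (simp add: gudermann_term_def algebra_simps)
qed (simp add: algebra_simps)

lemma Gamma_series_eq_exp_gudermann:
  fixes u :: complex
  assumes "Im u \<noteq> 0" "1 \<le> n"
  shows "Gamma_series u n = fact n * exp (of_real (of_nat n - (of_nat n + 1/2) * ln (of_nat n)))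
    * exp ((u - 1/2) * Ln u - u + (\<Sum>k<n. gudermann_term (u + of_nat k))
           + (u - (u + of_nat n + 1/2) * Ln (1 + u / of_nat n)))"
proof -
  have nz: "u + of_nat k \<noteq> 0" for k using assms(1) by (auto simp: complex_eq_iff)
  have "pochhammer u (n + 1) = (\<Prod>k\<le>n. exp (Ln (u + of_nat k)))"
    using nz by (simp add: pochhammer_prod atLeast0LessThan lessThan_Suc_atMost)
  then have poch: "pochhammer u (n + 1) = exp (\<Sum>k\<le>n. Ln (u + of_nat k))"
    by (simp add: exp_sum)
  have "0 < real n" using assms(2) by simp
  have "u + of_nat n = of_real (real n) * (1 + u / of_nat n)" "1 + u / of_nat n \<noteq> 0"
    using nz[of n] \<open>0 < real n\<close> by (simp_all add: field_simps)
  then have Ln_n: "Ln (u + of_nat n) = of_real (ln (of_nat n)) + Ln (1 + u / of_nat n)"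
    using Ln_times_of_real[OF \<open>0 < real n\<close>] \<open>0 < real n\<close> by simp
  have "Gamma_series u n = fact n * exp (u * of_real (ln (of_nat n)) - (\<Sum>k\<le>n. Ln (u + of_nat k)))"
    unfolding Gamma_series_def poch by (simp add: exp_diff)
  also have "u * of_real (ln (of_nat n)) - (\<Sum>k\<le>n. Ln (u + of_nat k))
    = of_real (of_nat n - (of_nat n + 1/2) * ln (of_nat n)) + ((u - 1/2) * Ln u - u
      + (\<Sum>k<n. gudermann_term (u + of_nat k)) + (u - (u + of_nat n + 1/2) * Ln (1 + u / of_nat n)))"
    unfolding sum_gudermann_term_telescope Ln_n by (simp add: algebra_simps)
  finally show ?thesis by (simp add: exp_add)
qed

lemma tendsto_Ln_one_plus_div:
  fixes u :: complex
  shows "(\<lambda>n. (u + of_nat n + 1/2) * Ln (1 + u / of_nat n)) \<longlonglongrightarrow> u"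
proof -
  have "(\<lambda>n. of_nat n * Ln (1 + u / of_nat n) - u) \<longlonglongrightarrow> 0"
  proof (rule Lim_null_comparison)
    obtain N :: nat where N: "2 * norm u + 1 \<le> N" using real_arch_simple by blast
    show "\<forall>\<^sub>F n in sequentially. norm (of_nat n * Ln (1 + u / of_nat n) - u) \<le> 2 * norm u ^ 2 / of_nat n"
    proof (rule eventually_sequentiallyI[of N])
      fix n assume "N \<le> n"
      then have n: "0 < real n" "2 * norm u \<le> real n"
        using N by (smt (verit) norm_ge_zero of_nat_le_iff)+
      define x where "x = u / of_nat n"
      have "norm x = norm u / n" by (simp add: x_def norm_divide)
      then have "norm x \<le> 1/2" using n by (simp only:) (simp add: field_simps)
      then have "norm (Ln (1 + x) - x) \<le> norm x ^ 2 / (1 - norm x)"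
        by (intro Ln_approx_linear) simp
      also have "\<dots> \<le> norm x ^ 2 / (1/2)"
        using \<open>norm x \<le> 1/2\<close> by (intro divide_left_mono) auto
      finally have "norm (of_nat n * (Ln (1 + x) - x)) \<le> n * (2 * norm x ^ 2)"
        using n by (simp add: norm_mult)
      also have "\<dots> = 2 * norm u ^ 2 / n"
        using n unfolding \<open>norm x = norm u / n\<close> by (simp add: field_simps power2_eq_square)
      also have "of_nat n * (Ln (1 + x) - x) = of_nat n * Ln (1 + u / of_nat n) - u"
        using n by (simp add: x_def field_simps)
      finally show "norm (of_nat n * Ln (1 + u / of_nat n) - u) \<le> 2 * norm u ^ 2 / of_nat n" .
    qed
  qed (rule lim_const_over_n)
  moreover have "(\<lambda>n. (u + 1/2) * Ln (1 + u / of_nat n)) \<longlonglongrightarrow> (u + 1/2) * Ln (1 + 0)"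
    by (intro tendsto_intros) auto
  ultimately have "(\<lambda>n. (of_nat n * Ln (1 + u / of_nat n) - u) + (u + 1/2) * Ln (1 + u / of_nat n) + u)
      \<longlonglongrightarrow> 0 + (u + 1/2) * Ln (1 + 0) + u"
    by (intro tendsto_add tendsto_const)
  then show ?thesis by (simp add: algebra_simps)
qed

definition gudermann_log_Gamma :: "complex \<Rightarrow> complex" where
  "gudermann_log_Gamma u = (u - 1/2) * Ln u - u + (\<Sum>k. gudermann_term (u + of_nat k))"

lemma Gamma_divide_Gamma_eq_exp:
  fixes w z :: complex
  assumes "Im w \<noteq> 0" "Im z \<noteq> 0"
    and "summable (\<lambda>k. gudermann_term (w + of_nat k))" "summable (\<lambda>k. gudermann_term (z + of_nat k))"
  shows "Gamma w / Gamma z = exp (gudermann_log_Gamma w - gudermann_log_Gamma z)"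
proof -
  define F where "F n u = (u - 1/2) * Ln u - u + (\<Sum>k<n. gudermann_term (u + of_nat k))
    + (u - (u + of_nat n + 1/2) * Ln (1 + u / of_nat n))" for n u
  have F_lim: "(\<lambda>n. F n u) \<longlonglongrightarrow> gudermann_log_Gamma u"
    if "summable (\<lambda>k. gudermann_term (u + of_nat k))" for u
  proof -
    have "(\<lambda>n. F n u) \<longlonglongrightarrow> (u - 1/2) * Ln u - u + (\<Sum>k. gudermann_term (u + of_nat k)) + (u - u)"
      unfolding F_def by (intro tendsto_intros summable_LIMSEQ that tendsto_Ln_one_plus_div)
    then show ?thesis by (simp add: gudermann_log_Gamma_def)
  qed
  have "(\<lambda>n. exp (F n w - F n z)) \<longlonglongrightarrow> exp (gudermann_log_Gamma w - gudermann_log_Gamma z)"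
    by (intro tendsto_intros F_lim assms(3,4))
  moreover have "\<forall>\<^sub>F n in sequentially. exp (F n w - F n z) = Gamma_series w n / Gamma_series z n"
  proof (rule eventually_sequentiallyI[of 1])
    fix n :: nat assume "1 \<le> n"
    then show "exp (F n w - F n z) = Gamma_series w n / Gamma_series z n"
      unfolding Gamma_series_eq_exp_gudermann[OF assms(1) \<open>1 \<le> n\<close>]
        Gamma_series_eq_exp_gudermann[OF assms(2) \<open>1 \<le> n\<close>] F_def
      by (simp add: exp_diff)
  qed
  ultimately have "(\<lambda>n. Gamma_series w n / Gamma_series z n)
      \<longlonglongrightarrow> exp (gudermann_log_Gamma w - gudermann_log_Gamma z)"
    by (rule Lim_transform_eventually)
  moreover have "z \<notin> \<int>\<^sub>\<le>\<^sub>0" using assms(2) by (auto elim!: nonpos_Ints_cases simp: complex_eq_iff)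
  then have "(\<lambda>n. Gamma_series w n / Gamma_series z n) \<longlonglongrightarrow> Gamma w / Gamma z"
    by (intro tendsto_divide Gamma_series_LIMSEQ Gamma_nonzero)
  ultimately show ?thesis using LIMSEQ_unique by metis
qed

section \<open>The quotient Gamma ((1 - s)/2) / Gamma (s/2)\<close>

lemma gudermann_numeric_bound:
  fixes t :: real
  assumes "1 \<le> t"
  shows "t * ((2/5) / (1 + t) + gudermann_const (1 / (1/4 + t^2)) / (1/4 + t^2) + (2/5) / (3/2 + t)) \<le> 4/3"
proof -
  define \<rho> where "\<rho> = 1 / (1/4 + t^2)"
  have "1 \<le> t^2" using assms by simp
  then have "0 \<le> \<rho>" by (simp add: \<rho>_def)
  have pos: "0 < 1/4 + t^2" by (simp add: add_pos_nonneg)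
  have bound: "t * ((2/5) / (1 + t) + gudermann_const \<rho> / (1/4 + t^2) + (2/5) / (3/2 + t))
      \<le> 2/5 * b\<^sub>1 + gudermann_const R * m + 2/5 * b\<^sub>2"
    if "\<rho> \<le> R" "R < 1" "t / (1/4 + t^2) \<le> m" "t / (1 + t) \<le> b\<^sub>1" "t / (3/2 + t) \<le> b\<^sub>2"
    for R m b\<^sub>1 b\<^sub>2
  proof -
    have "gudermann_const \<rho> \<le> gudermann_const R"
      using that \<open>0 \<le> \<rho>\<close> by (intro gudermann_const_mono)
    moreover have "0 \<le> gudermann_const \<rho>" "0 \<le> t / (1/4 + t^2)"
      using \<open>0 \<le> \<rho>\<close> that(1,2) assms by (auto simp: gudermann_const_def)
    ultimately have "gudermann_const \<rho> * (t / (1/4 + t^2)) \<le> gudermann_const R * m"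
      using that(3) by (meson mult_mono order_trans)
    moreover have "t * ((2/5) / (1 + t) + gudermann_const \<rho> / (1/4 + t^2) + (2/5) / (3/2 + t))
      = 2/5 * (t / (1 + t)) + gudermann_const \<rho> * (t / (1/4 + t^2)) + 2/5 * (t / (3/2 + t))"
      by (simp add: algebra_simps)
    ultimately show ?thesis using that(4,5) by linarith
  qed
  show ?thesis
  proof (cases "t \<le> 2")
    case True
    have "(4*t - 1) * (t - 1) \<ge> 0" using assms by simp
    then have m: "t / (1/4 + t^2) \<le> 4/5"
      unfolding pos_divide_le_eq[OF pos] by (simp add: algebra_simps power2_eq_square)
    have R: "\<rho> \<le> 4/5" using \<open>1 \<le> t^2\<close> by (simp add: \<rho>_def field_simps)
    have b: "t / (1 + t) \<le> 2/3" "t / (3/2 + t) \<le> 4/7" using True assms by (simp_all add: field_simps)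
    have "t * ((2/5) / (1 + t) + gudermann_const \<rho> / (1/4 + t^2) + (2/5) / (3/2 + t))
        \<le> 2/5 * (2/3) + gudermann_const (4/5) * (4/5) + 2/5 * (4/7)"
      by (rule bound[OF R _ m b]) simp
    also have "\<dots> \<le> 4/3" by (simp add: gudermann_const_def power2_eq_square)
    finally show ?thesis by (simp add: \<rho>_def)
  next
    case False
    have "(8*t - 1) * (t - 2) \<ge> 0" using False by simp
    then have m: "t / (1/4 + t^2) \<le> 8/17"
      unfolding pos_divide_le_eq[OF pos] by (simp add: algebra_simps power2_eq_square)
    have "2^2 \<le> t^2" using False by (intro power_mono) auto
    then have R: "\<rho> \<le> 4/17" by (simp add: \<rho>_def field_simps)
    have b: "t / (1 + t) \<le> 1" "t / (3/2 + t) \<le> 1" using assms by simp_all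
    have "t * ((2/5) / (1 + t) + gudermann_const \<rho> / (1/4 + t^2) + (2/5) / (3/2 + t))
        \<le> 2/5 * 1 + gudermann_const (4/17) * (8/17) + 2/5 * 1"
      by (rule bound[OF R _ m b]) simp
    also have "\<dots> \<le> 4/3" by (simp add: gudermann_const_def power2_eq_square)
    finally show ?thesis by (simp add: \<rho>_def)
  qed
qed

lemma gudermann_difference_bound:
  fixes \<sigma> t :: real
  assumes "-1/2 \<le> \<sigma>" "\<sigma> < 0" "1 \<le> t"
  defines "w \<equiv> Complex ((1 - \<sigma>)/2) (-t/2)" and "z \<equiv> Complex (\<sigma>/2) (t/2)"
  shows "summable (\<lambda>k. gudermann_term (w + of_nat k))"
    and "summable (\<lambda>k. gudermann_term (z + of_nat k))"
    and "norm ((\<Sum>k. gudermann_term (w + of_nat k)) - (\<Sum>k. gudermann_term (z + of_nat k))) \<le> (4/3) / t"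
proof -
  \<comment> \<open>The term at z is estimated on its own: for t near 1 the tail bound of
    \<open>gudermann_series_bound\<close> applied at z itself would exceed 4/(3t).\<close>
  define z\<^sub>1 where "z\<^sub>1 = z + 1"
  define \<rho> where "\<rho> = 1 / (1/4 + t^2)"
  have "1 \<le> t^2" using assms(3) by simp
  then have "\<rho> < 1" "0 \<le> \<rho>" by (simp_all add: \<rho>_def)
  have "Im w \<noteq> 0" "Im z \<noteq> 0" "Im z\<^sub>1 \<noteq> 0" using assms(3) by (simp_all add: w_def z_def z\<^sub>1_def)
  have "norm (2*w + 1)^2 = (2 - \<sigma>)^2 + t^2" "norm (2*z\<^sub>1 + 1)^2 = (\<sigma> + 3)^2 + t^2"
    "norm (2*z + 1)^2 = (\<sigma> + 1)^2 + t^2"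
    unfolding cmod_power2 by (simp_all add: w_def z_def z\<^sub>1_def power2_eq_square field_simps)
  moreover have "2^2 \<le> (2 - \<sigma>)^2" "(5/2)^2 \<le> (\<sigma> + 3)^2" "(1/2)^2 \<le> (\<sigma> + 1)^2"
    using assms(1,2) by (intro power_mono; simp)+
  ultimately have R: "1 / norm (2*w + 1)^2 \<le> 1/5" "1 / norm (2*z\<^sub>1 + 1)^2 \<le> 4/29"
    "1 / norm (2*z + 1)^2 \<le> \<rho>" and "1/4 + t^2 \<le> norm (2*z + 1)^2"
    using \<open>1 \<le> t^2\<close> by (simp_all add: \<rho>_def field_simps)
  have "gudermann_const (1/5) \<le> 2/5" "gudermann_const (4/29) \<le> 2/5" "0 \<le> gudermann_const \<rho>"
    using \<open>\<rho> < 1\<close> \<open>0 \<le> \<rho>\<close> by (simp_all add: gudermann_const_def power2_eq_square)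
  have Re: "-1/2 \<le> Re w" "0 < Re w + \<bar>Im w\<bar>" "-1/2 \<le> Re z\<^sub>1" "0 < Re z\<^sub>1 + \<bar>Im z\<^sub>1\<bar>"
    using assms(1-3) by (simp_all add: w_def z_def z\<^sub>1_def field_simps)
  have "1/5 < (1::real)" "4/29 < (1::real)" by simp_all
  note sum_w = gudermann_series_bound[OF \<open>Im w \<noteq> 0\<close> Re(1,2) R(1) this(1)]
    and sum_z\<^sub>1 = gudermann_series_bound[OF \<open>Im z\<^sub>1 \<noteq> 0\<close> Re(3,4) R(2) this(2)]
  have le_w: "(\<Sum>k. norm (gudermann_term (w + of_nat k))) \<le> (2/5) / (1 + t)"
  proof -
    have "(\<Sum>k. norm (gudermann_term (w + of_nat k))) \<le> gudermann_const (1/5) / (1 - \<sigma> + t)"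
      using sum_w(2) assms(2,3) by (simp add: w_def field_simps)
    also have "\<dots> \<le> (2/5) / (1 + t)"
      using \<open>gudermann_const (1/5) \<le> 2/5\<close> assms(2,3) by (intro frac_le) auto
    finally show ?thesis .
  qed
  have le_z\<^sub>1: "(\<Sum>k. norm (gudermann_term (z\<^sub>1 + of_nat k))) \<le> (2/5) / (3/2 + t)"
  proof -
    have "(\<Sum>k. norm (gudermann_term (z\<^sub>1 + of_nat k))) \<le> gudermann_const (4/29) / (\<sigma> + 2 + t)"
      using sum_z\<^sub>1(2) assms(1,3) by (simp add: z_def z\<^sub>1_def field_simps)
    also have "\<dots> \<le> (2/5) / (3/2 + t)"
      using \<open>gudermann_const (4/29) \<le> 2/5\<close> assms(1,3) by (intro frac_le) auto
    finally show ?thesis .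
  qed
  have le_z: "norm (gudermann_term z) \<le> gudermann_const \<rho> / (1/4 + t^2)"
  proof -
    have "norm (gudermann_term z) \<le> gudermann_const \<rho> / norm (2*z + 1)^2"
      using norm_gudermann_term_le_const[OF \<open>Im z \<noteq> 0\<close> R(3) \<open>\<rho> < 1\<close>] .
    also have "\<dots> \<le> gudermann_const \<rho> / (1/4 + t^2)"
      using \<open>0 \<le> gudermann_const \<rho>\<close> \<open>1/4 + t^2 \<le> norm (2*z + 1)^2\<close> \<open>1 \<le> t^2\<close>
      by (intro divide_left_mono mult_pos_pos) auto
    finally show ?thesis .
  qed
  show "summable (\<lambda>k. gudermann_term (w + of_nat k))"
    using sum_w(1) by (rule summable_norm_cancel)
  have shift: "z + of_nat (Suc k) = z\<^sub>1 + of_nat k" for k by (simp add: z\<^sub>1_def)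
  have "summable (\<lambda>k. gudermann_term (z\<^sub>1 + of_nat k))"
    using sum_z\<^sub>1(1) by (rule summable_norm_cancel)
  then show summ_z: "summable (\<lambda>k. gudermann_term (z + of_nat k))"
    by (subst summable_Suc_iff[symmetric]) (simp only: shift)
  have split_z: "(\<Sum>k. gudermann_term (z + of_nat k)) = gudermann_term z + (\<Sum>k. gudermann_term (z\<^sub>1 + of_nat k))"
    using suminf_split_head[OF summ_z] by (simp only: shift) simp
  have "norm ((\<Sum>k. gudermann_term (w + of_nat k)) - (\<Sum>k. gudermann_term (z + of_nat k)))
      \<le> norm (\<Sum>k. gudermann_term (w + of_nat k)) + norm (\<Sum>k. gudermann_term (z + of_nat k))"
    by (rule norm_triangle_ineq4)
  also have "norm (\<Sum>k. gudermann_term (z + of_nat k))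
      \<le> norm (gudermann_term z) + norm (\<Sum>k. gudermann_term (z\<^sub>1 + of_nat k))"
    unfolding split_z by (rule norm_triangle_ineq)
  also have "norm (\<Sum>k. gudermann_term (w + of_nat k)) \<le> (\<Sum>k. norm (gudermann_term (w + of_nat k)))"
    by (rule summable_norm[OF sum_w(1)])
  also have "norm (\<Sum>k. gudermann_term (z\<^sub>1 + of_nat k)) \<le> (\<Sum>k. norm (gudermann_term (z\<^sub>1 + of_nat k)))"
    by (rule summable_norm[OF sum_z\<^sub>1(1)])
  finally have "norm ((\<Sum>k. gudermann_term (w + of_nat k)) - (\<Sum>k. gudermann_term (z + of_nat k)))
      \<le> (2/5) / (1 + t) + gudermann_const \<rho> / (1/4 + t^2) + (2/5) / (3/2 + t)"
    using le_w le_z le_z\<^sub>1 by linarith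
  also have "\<dots> \<le> (4/3) / t"
    using gudermann_numeric_bound[OF assms(3)] assms(3) by (simp add: \<rho>_def field_simps)
  finally show "norm ((\<Sum>k. gudermann_term (w + of_nat k)) - (\<Sum>k. gudermann_term (z + of_nat k))) \<le> (4/3) / t" .
qed

lemma Ln_Complex_fourth_quadrant:
  fixes x y :: real
  assumes "0 < x" "0 < y"
  shows "Ln (Complex x (-y)) = Complex (ln (x^2 + y^2) / 2) (arctan (x/y) - pi/2)"
proof (rule complex_eqI)
  have nz: "Complex x (-y) \<noteq> 0" using assms by (simp add: complex_eq_iff)
  then show "Re (Ln (Complex x (-y))) = Re (Complex (ln (x^2 + y^2) / 2) (arctan (x/y) - pi/2))"
    by (simp add: complex_norm ln_sqrt)
  have "Im (Ln (Complex x (-y))) = - arctan (inverse (x/y))"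
    using Im_Ln_eq[OF nz] assms by (simp add: arctan_minus[symmetric])
  also have "\<dots> = arctan (x/y) - pi/2"
    using Complex_Transcendental.arctan_inverse[of "x/y"] assms by simp
  finally show "Im (Ln (Complex x (-y))) = Im (Complex (ln (x^2 + y^2) / 2) (arctan (x/y) - pi/2))"
    by simp
qed

lemma Ln_Complex_second_quadrant:
  fixes x y :: real
  assumes "0 < x" "0 < y"
  shows "Ln (Complex (-x) y) = Complex (ln (x^2 + y^2) / 2) (pi/2 + arctan (x/y))"
proof (rule complex_eqI)
  have nz: "Complex (-x) y \<noteq> 0" using assms by (simp add: complex_eq_iff)
  then show "Re (Ln (Complex (-x) y)) = Re (Complex (ln (x^2 + y^2) / 2) (pi/2 + arctan (x/y)))"
    by (simp add: complex_norm ln_sqrt)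
  have "Im (Ln (Complex (-x) y)) = pi - arctan (inverse (x/y))"
    using Im_Ln_eq[OF nz] assms by (simp add: arctan_minus)
  also have "\<dots> = pi/2 + arctan (x/y)"
    using Complex_Transcendental.arctan_inverse[of "x/y"] assms by simp
  finally show "Im (Ln (Complex (-x) y)) = Im (Complex (ln (x^2 + y^2) / 2) (pi/2 + arctan (x/y)))"
    by simp
qed

lemma ln_quarter_sum_squares:
  fixes x t :: real
  assumes "0 < t"
  shows "ln ((x^2 + t^2) / 4) = 2 * ln t + ln (1 + x^2 / t^2) - 2 * ln 2"
proof -
  have "0 < 1 + x^2 / t^2" by (simp add: add_pos_nonneg)
  have "(x^2 + t^2) / 4 = t^2 * (1 + x^2 / t^2) / 2^2" using assms by (simp add: field_simps)
  then have "ln ((x^2 + t^2) / 4) = ln (t^2) + ln (1 + x^2 / t^2) - ln (2^2)"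
    using \<open>0 < 1 + x^2 / t^2\<close> assms by (simp only: ln_divide_pos ln_mult_pos mult_pos_pos zero_less_power zero_less_numeral)
  then show ?thesis by (simp only: ln_realpow)
qed

lemma arctan_sum_bound:
  fixes a b t :: real
  assumes "0 \<le> a" "0 \<le> b" "0 < t"
  shows "\<bar>t/2 * (arctan (a/t) + arctan (b/t))\<bar> \<le> (a + b) / 2"
proof -
  have "0 \<le> arctan (a/t)" "arctan (a/t) \<le> a/t" "0 \<le> arctan (b/t)" "arctan (b/t) \<le> b/t"
    using assms by (simp_all add: arctan_le_self)
  then have "0 \<le> t/2 * (arctan (a/t) + arctan (b/t))" "t/2 * (arctan (a/t) + arctan (b/t)) \<le> t/2 * (a/t + b/t)"
    using assms by (auto intro: mult_left_mono)
  moreover have "t/2 * (a/t + b/t) = (a + b) / 2" using assms by (simp add: field_simps)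
  ultimately show ?thesis by simp
qed

lemma arctan_ln_bound:
  fixes a b t :: real
  assumes "0 \<le> a" "0 \<le> b" "0 < t"
  shows "\<bar>pi/4 + (b * arctan (a/t) + a * arctan (b/t)) / 2 - t/4 * (ln (1 + a^2/t^2) + ln (1 + b^2/t^2))\<bar>
    \<le> pi/4 + (a*b + (a^2 + b^2)/4) / t"
proof -
  define X where "X = b * arctan (a/t) + a * arctan (b/t)"
  define Y where "Y = t/4 * (ln (1 + a^2/t^2) + ln (1 + b^2/t^2))"
  have "0 \<le> arctan (a/t)" "arctan (a/t) \<le> a/t" "0 \<le> arctan (b/t)" "arctan (b/t) \<le> b/t"
    using assms by (simp_all add: arctan_le_self)
  have "b * arctan (a/t) \<le> b * (a/t)"
    using \<open>arctan (a/t) \<le> a/t\<close> assms(2) by (rule mult_left_mono)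
  moreover have "a * arctan (b/t) \<le> a * (b/t)"
    using \<open>arctan (b/t) \<le> b/t\<close> assms(1) by (rule mult_left_mono)
  ultimately have "X \<le> b * (a/t) + a * (b/t)" unfolding X_def by (rule add_mono)
  moreover have "b * (a/t) + a * (b/t) = 2 * (a*b/t)" by simp
  ultimately have "X \<le> 2 * (a*b/t)" by linarith
  have "0 \<le> X" using assms \<open>0 \<le> arctan (a/t)\<close> \<open>0 \<le> arctan (b/t)\<close> by (simp add: X_def)
  have "0 \<le> ln (1 + a^2/t^2)" "ln (1 + a^2/t^2) \<le> a^2/t^2"
    "0 \<le> ln (1 + b^2/t^2)" "ln (1 + b^2/t^2) \<le> b^2/t^2"
    by (simp_all add: ln_add_one_self_le_self)
  then have "0 \<le> Y" "Y \<le> t/4 * (a^2/t^2 + b^2/t^2)"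
    using assms unfolding Y_def by (auto intro!: mult_left_mono)
  moreover have "t/4 * (a^2/t^2 + b^2/t^2) = (a^2 + b^2) / (4*t)"
    using assms by (simp add: field_simps power2_eq_square)
  moreover have "(a*b + (a^2 + b^2)/4) / t = a*b/t + (a^2 + b^2) / (4*t)"
    using assms by (simp add: field_simps)
  ultimately show ?thesis
    using \<open>0 \<le> X\<close> \<open>X \<le> 2 * (a*b/t)\<close> pi_gt_zero unfolding X_def[symmetric] Y_def[symmetric] by linarith
qed

definition gamma_ratio_main_error :: "real \<Rightarrow> real \<Rightarrow> complex" where
  "gamma_ratio_main_error \<sigma> t = Complex (t/2 * (arctan ((1 - \<sigma>)/t) + arctan (-\<sigma>/t)))
     (pi/4 + (-\<sigma> * arctan ((1 - \<sigma>)/t) + (1 - \<sigma>) * arctan (-\<sigma>/t)) / 2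
       - t/4 * (ln (1 + (1 - \<sigma>)^2/t^2) + ln (1 + (-\<sigma>)^2/t^2)))"

lemma norm_gamma_ratio_main_error_le:
  fixes \<sigma> t :: real
  assumes "\<sigma> < 0" "0 < t"
  shows "norm (gamma_ratio_main_error \<sigma> t) \<le> pi/4 + (1 - 2*\<sigma>)/2 + (18*\<sigma>^2 - 18*\<sigma> + 3)/(12*t)"
proof -
  let ?M = "gamma_ratio_main_error \<sigma> t"
  have "\<bar>Re ?M\<bar> \<le> (1 - 2*\<sigma>)/2"
    using arctan_sum_bound[of "1 - \<sigma>" "-\<sigma>" t] assms by (simp add: gamma_ratio_main_error_def)
  moreover have "\<bar>Im ?M\<bar> \<le> pi/4 + ((1 - \<sigma>) * (-\<sigma>) + ((1 - \<sigma>)^2 + (-\<sigma>)^2)/4) / t"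
    using arctan_ln_bound[of "1 - \<sigma>" "-\<sigma>" t] assms by (simp add: gamma_ratio_main_error_def)
  moreover have "((1 - \<sigma>) * (-\<sigma>) + ((1 - \<sigma>)^2 + (-\<sigma>)^2)/4) / t = (18*\<sigma>^2 - 18*\<sigma> + 3)/(12*t)"
    using assms(2) by (simp add: field_simps power2_eq_square)
  ultimately show ?thesis using cmod_le[of ?M] by linarith
qed

lemma pi_powr_mul_exp_main_term:
  fixes \<sigma> t :: real
  assumes "\<sigma> < 0" "0 < t"
  defines "w \<equiv> Complex ((1 - \<sigma>)/2) (-t/2)" and "z \<equiv> Complex (\<sigma>/2) (t/2)"
  shows "complex_of_real pi powr (Complex \<sigma> t - 1/2) * exp ((w - 1/2) * Ln w - w - ((z - 1/2) * Ln z - z))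
    = complex_of_real ((((1-\<sigma>)^2 + t^2)/4) powr (-\<sigma>/4) * ((\<sigma>^2 + t^2)/4) powr ((1-\<sigma>)/4)
        * pi powr (\<sigma> - 1/2))
      * exp (complex_of_real (\<sigma> - 1/2) + \<i> * complex_of_real (t * (- ln t + ln (2*pi) + 1))
        + gamma_ratio_main_error \<sigma> t)"
proof -
  define \<alpha> \<beta> where "\<alpha> = arctan ((1 - \<sigma>)/t)" and "\<beta> = arctan (-\<sigma>/t)"
  define A B where "A = ((1-\<sigma>)^2 + t^2)/4" and "B = (\<sigma>^2 + t^2)/4"
  have "0 < A" "0 < B" using assms(2) by (simp_all add: A_def B_def add_nonneg_pos)
  have arg: "((1-\<sigma>)/2) / (t/2) = (1-\<sigma>)/t" using assms(2) by (simp add: field_simps)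
  have Ln_w: "Ln w = Complex (ln A / 2) (\<alpha> - pi/2)"
    using Ln_Complex_fourth_quadrant[of "(1-\<sigma>)/2" "t/2", unfolded arg] assms(1,2)
    by (simp add: w_def A_def \<alpha>_def power_divide add_divide_distrib)
  have Ln_z: "Ln z = Complex (ln B / 2) (pi/2 + \<beta>)"
    using Ln_Complex_second_quadrant[of "-\<sigma>/2" "t/2"] assms(1,2)
    by (simp add: z_def B_def \<beta>_def power_divide add_divide_distrib)
  have ln_AB: "ln A = 2 * ln t + ln (1 + (1-\<sigma>)^2/t^2) - 2 * ln 2"
    "ln B = 2 * ln t + ln (1 + (-\<sigma>)^2/t^2) - 2 * ln 2"
    using ln_quarter_sum_squares[OF assms(2)] by (simp_all add: A_def B_def)
  have "ln (2*pi) = ln 2 + ln pi" by (simp add: ln_mult)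
  then have main: "(Complex \<sigma> t - 1/2) * of_real (ln pi) + ((w - 1/2) * Ln w - w - ((z - 1/2) * Ln z - z))
    = of_real (-\<sigma>/4 * ln A + (1-\<sigma>)/4 * ln B + (\<sigma> - 1/2) * ln pi)
      + (of_real (\<sigma> - 1/2) + \<i> * of_real (t * (- ln t + ln (2*pi) + 1))
        + Complex (t/2 * (\<alpha> + \<beta>))
            (pi/4 + (-\<sigma> * \<alpha> + (1 - \<sigma>) * \<beta>) / 2
              - t/4 * (ln (1 + (1-\<sigma>)^2/t^2) + ln (1 + (-\<sigma>)^2/t^2))))"
    unfolding Ln_w Ln_z by (simp add: complex_eq_iff w_def z_def ln_AB algebra_simps) (simp add: field_simps)
  have C: "A powr (-\<sigma>/4) * B powr ((1-\<sigma>)/4) * pi powr (\<sigma> - 1/2)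
      = exp (-\<sigma>/4 * ln A + (1-\<sigma>)/4 * ln B + (\<sigma> - 1/2) * ln pi)"
    using \<open>0 < A\<close> \<open>0 < B\<close> by (simp add: powr_def algebra_simps flip: exp_add)
  have "complex_of_real pi powr (Complex \<sigma> t - 1/2) * exp ((w - 1/2) * Ln w - w - ((z - 1/2) * Ln z - z))
      = exp ((Complex \<sigma> t - 1/2) * of_real (ln pi) + ((w - 1/2) * Ln w - w - ((z - 1/2) * Ln z - z)))"
    by (simp add: powr_def Ln_of_real exp_add)
  also have "\<dots> = exp (of_real (-\<sigma>/4 * ln A + (1-\<sigma>)/4 * ln B + (\<sigma> - 1/2) * ln pi))
      * exp (of_real (\<sigma> - 1/2) + \<i> * of_real (t * (- ln t + ln (2*pi) + 1))
        + gamma_ratio_main_error \<sigma> t)"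
    unfolding main exp_add gamma_ratio_main_error_def \<alpha>_def \<beta>_def ..
  also have "exp (of_real (-\<sigma>/4 * ln A + (1-\<sigma>)/4 * ln B + (\<sigma> - 1/2) * ln pi))
      = complex_of_real (A powr (-\<sigma>/4) * B powr ((1-\<sigma>)/4) * pi powr (\<sigma> - 1/2))"
    unfolding C by (rule exp_of_real)
  finally show ?thesis by (simp only: A_def B_def)
qed

lemma pi_powr_mul_Gamma_quotient_eq:
  fixes \<sigma> t :: real
  assumes "-1/2 \<le> \<sigma>" "\<sigma> < 0" "1 \<le> t"
  defines "w \<equiv> Complex ((1 - \<sigma>)/2) (-t/2)" and "z \<equiv> Complex (\<sigma>/2) (t/2)"
  shows "complex_of_real pi powr (Complex \<sigma> t - 1/2) * Gamma ((1 - Complex \<sigma> t)/2) / Gamma (Complex \<sigma> t / 2)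
    = complex_of_real ((((1-\<sigma>)^2 + t^2)/4) powr (-\<sigma>/4) * ((\<sigma>^2 + t^2)/4) powr ((1-\<sigma>)/4)
        * pi powr (\<sigma> - 1/2))
      * exp (complex_of_real (\<sigma> - 1/2) + \<i> * complex_of_real (t * (- ln t + ln (2*pi) + 1))
        + (gamma_ratio_main_error \<sigma> t
           + ((\<Sum>k. gudermann_term (w + of_nat k)) - (\<Sum>k. gudermann_term (z + of_nat k)))))"
proof -
  have "0 < t" using assms(3) by simp
  have "(1 - Complex \<sigma> t)/2 = w" "Complex \<sigma> t / 2 = z" by (simp_all add: w_def z_def complex_eq_iff)
  moreover have "Gamma w / Gamma z = exp ((w - 1/2) * Ln w - w - ((z - 1/2) * Ln z - z))
      * exp ((\<Sum>k. gudermann_term (w + of_nat k)) - (\<Sum>k. gudermann_term (z + of_nat k)))"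
    using gudermann_difference_bound(1,2)[OF assms(1-3), folded w_def z_def] \<open>0 < t\<close>
    unfolding exp_add[symmetric]
    by (subst Gamma_divide_Gamma_eq_exp) (simp_all add: w_def z_def gudermann_log_Gamma_def algebra_simps)
  ultimately have "complex_of_real pi powr (Complex \<sigma> t - 1/2) * Gamma ((1 - Complex \<sigma> t)/2) / Gamma (Complex \<sigma> t / 2)
      = complex_of_real pi powr (Complex \<sigma> t - 1/2) * exp ((w - 1/2) * Ln w - w - ((z - 1/2) * Ln z - z))
        * exp ((\<Sum>k. gudermann_term (w + of_nat k)) - (\<Sum>k. gudermann_term (z + of_nat k)))"
    by (simp only: times_divide_eq_right[symmetric] mult.assoc)
  also note pi_powr_mul_exp_main_term[OF assms(2) \<open>0 < t\<close>, folded w_def z_def]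
  finally show ?thesis by (simp add: exp_add mult.assoc)
qed

theorem lemma3p10:
  fixes \<sigma> t :: real
  assumes "-1/2 \<le> \<sigma>" and "\<sigma> < 0" and "t \<ge> 1"
  shows "\<exists>E::complex.
    norm E \<le> pi/4 + (1 - 2*\<sigma>)/2 + (18*\<sigma>^2 - 18*\<sigma> + 19)/(12*t) \<and>
    complex_of_real pi powr (Complex \<sigma> t - 1/2) * Gamma ((1 - Complex \<sigma> t)/2) / Gamma (Complex \<sigma> t / 2)
    = complex_of_real ((((1-\<sigma>)^2 + t^2)/4) powr (-\<sigma>/4) * ((\<sigma>^2 + t^2)/4) powr ((1-\<sigma>)/4)
        * pi powr (\<sigma> - 1/2))
      * exp (complex_of_real (\<sigma> - 1/2) + \<i> * complex_of_real (t * (- ln t + ln (2*pi) + 1)) + E)"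
proof -
  define D where "D = (\<Sum>k. gudermann_term (Complex ((1 - \<sigma>)/2) (-t/2) + of_nat k))
    - (\<Sum>k. gudermann_term (Complex (\<sigma>/2) (t/2) + of_nat k))"
  have "0 < t" using assms(3) by simp
  have "(18*\<sigma>^2 - 18*\<sigma> + 19)/(12*t) = (18*\<sigma>^2 - 18*\<sigma> + 3)/(12*t) + (4/3) / t"
    using \<open>0 < t\<close> by (simp add: field_simps)
  then have "norm (gamma_ratio_main_error \<sigma> t + D) \<le> pi/4 + (1 - 2*\<sigma>)/2 + (18*\<sigma>^2 - 18*\<sigma> + 19)/(12*t)"
    using norm_triangle_ineq[of "gamma_ratio_main_error \<sigma> t" D]
      gudermann_difference_bound(3)[OF assms, folded D_def]
      norm_gamma_ratio_main_error_le[OF assms(2) \<open>0 < t\<close>] by linarith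
  then show ?thesis using pi_powr_mul_Gamma_quotient_eq[OF assms, folded D_def] by blast
qed

end
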